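(* For every positive integer $h$, the sumset size set $\mathcal{R}_{\mathbf{Z}}(h,4)$ contains the $h$-term arithmetic progression $\{bh+1 : b \in [3,h+2]\}$.
   Context: For a positive integer $h$ and a finite set $A$ of integers, $hA$ denotes the set of all sums $a_1+\cdots+a_h$ with $a_1,\ldots,a_h \in A$ (not necessarily distinct). The sumset size set is $\mathcal{R}_{\mathbf{Z}}(h,k) = \{ |hA| : A \subseteq \mathbf{Z},\ |A| = k\}$. For real $u,v$, $[u,v] = \{n \in \mathbf{Z} : u \le n \le v\}$. *)

theory Defs
  imports Main
begin

definition hsumset :: "nat \<Rightarrow> int set \<Rightarrow> int set" where
  "hsumset h A = {(\<Sum>i<h. a i) | a. \<forall>i<h. a i \<in> A}"

definition sumset_sizes :: "nat \<Rightarrow> nat \<Rightarrow> nat set" where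
  "sumset_sizes h k = {card (hsumset h A) | A. finite A \<and> card A = k}"

end

theory Submission
  imports Defs
begin

text \<open>For \<open>3 \<le> b \<le> h + 2\<close> take \<open>A = {0, 1, b - 1, b}\<close>. Then \<open>hA\<close> is all of \<open>[0, bh]\<close>:
  write \<open>n = qb + r\<close> with \<open>0 \<le> r < b\<close>; if \<open>q + r \<le> h\<close> use \<open>r\<close> ones and \<open>q\<close> copies of \<open>b\<close>,
  otherwise \<open>n = (b - r)(b - 1) + (q + 1 - (b - r)) b\<close> uses \<open>q + 1 \<le> h\<close> summands,
  the bound \<open>b \<le> h + 2\<close> guaranteeing \<open>b - r \<le> q + 1\<close>. Padding with zeros gives exactly \<open>h\<close>
  summands, so \<open>|hA| = bh + 1\<close>.\<close>

lemma sum_lessThan_add_nat: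
  fixes m n :: nat
  shows "(\<Sum>i<m + n. f i) = (\<Sum>i<m. f i) + (\<Sum>i<n. f (m + i))"
  by (induction n) (simp_all add: add.assoc)

lemma mem_hsumset_add:
  assumes "x \<in> hsumset m A" and "y \<in> hsumset n A"
  shows "x + y \<in> hsumset (m + n) A"
proof -
  obtain a where x: "x = (\<Sum>i<m. a i)" and a: "\<forall>i<m. a i \<in> A"
    using assms(1) unfolding hsumset_def by blast
  obtain a' where y: "y = (\<Sum>i<n. a' i)" and a': "\<forall>i<n. a' i \<in> A"
    using assms(2) unfolding hsumset_def by blast
  define c where "c i = (if i < m then a i else a' (i - m))" for i
  have "x + y = (\<Sum>i<m + n. c i)"
    unfolding sum_lessThan_add_nat x y c_def by simp
  moreover have "\<forall>i<m + n. c i \<in> A"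
    using a a' unfolding c_def by auto
  ultimately show ?thesis
    unfolding hsumset_def by blast
qed

lemma of_nat_mult_mem_hsumset:
  assumes "c \<in> A"
  shows "int k * c \<in> hsumset k A"
proof (induction k)
  case 0
  show ?case unfolding hsumset_def by simp
next
  case (Suc k)
  have "c \<in> hsumset 1 A"
    using assms unfolding hsumset_def by (auto intro: exI[of _ "\<lambda>_. c"])
  from mem_hsumset_add[OF Suc.IH this] show ?case
    by (simp add: algebra_simps)
qed

lemma hsumset_subset_atLeastAtMost:
  assumes "A \<subseteq> {0..B}"
  shows "hsumset h A \<subseteq> {0..int h * B}"
proof
  fix s assume "s \<in> hsumset h A"
  then obtain a where s: "s = (\<Sum>i<h. a i)" and a: "\<forall>i<h. a i \<in> A"
    unfolding hsumset_def by blast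
  have a_bounds: "0 \<le> a i" "a i \<le> B" if "i < h" for i
    using a assms that by auto
  have "0 \<le> s"
    unfolding s by (intro sum_nonneg) (simp add: a_bounds)
  moreover have "s \<le> int h * B"
    using sum_bounded_above[of "{..<h}" a B] a_bounds unfolding s by simp
  ultimately show "s \<in> {0..int h * B}" by simp
qed

lemma nat_le_mult_sum_one_pred_self:
  fixes b h n :: nat
  assumes "0 < b" and "b \<le> h + 2" and "n \<le> b * h"
  obtains x y z where "x + y + z \<le> h"
    and "int n = int x + int y * (int b - 1) + int z * int b"
proof -
  define q r where "q = n div b" and "r = n mod b"
  have n: "n = q * b + r" and "r < b"
    using \<open>0 < b\<close> unfolding q_def r_def by simp_all
  have "q \<le> h"
    using div_le_mono[OF \<open>n \<le> b * h\<close>, of b] \<open>0 < b\<close> unfolding q_def by simp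
  show thesis
  proof (cases "q + r \<le> h")
    case True
    with n show thesis by (intro that[of r 0 q]) simp_all
  next
    case False
    with \<open>q \<le> h\<close> have "r > 0" by simp
    have "q < h"
    proof (rule ccontr)
      assume "\<not> q < h"
      with \<open>q \<le> h\<close> have "q = h" by simp
      with n \<open>n \<le> b * h\<close> \<open>r > 0\<close> show False by (simp add: mult.commute)
    qed
    have "b - r \<le> q + 1"
      using False \<open>b \<le> h + 2\<close> by simp
    show thesis
    proof (rule that[of 0 "b - r" "q + 1 - (b - r)"])
      show "0 + (b - r) + (q + 1 - (b - r)) \<le> h"
        using \<open>q < h\<close> \<open>b - r \<le> q + 1\<close> by simp
      show "int n = int 0 + int (b - r) * (int b - 1) + int (q + 1 - (b - r)) * int b"
        using n \<open>r < b\<close> \<open>b - r \<le> q + 1\<close> by (simp add: of_nat_diff algebra_simps)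
    qed
  qed
qed

lemma card_atLeastAtMost_0_int: "card {0..int n} = n + 1"
  by (simp add: nat_add_distrib)

lemma hsumset_eq_atLeastAtMost:
  fixes b h :: nat
  assumes "0 < b" and "b \<le> h + 2"
  shows "hsumset h {0, 1, int b - 1, int b} = {0..int h * int b}"
    (is "hsumset h ?A = _")
proof
  show "hsumset h ?A \<subseteq> {0..int h * int b}"
    using \<open>0 < b\<close> by (intro hsumset_subset_atLeastAtMost) auto
next
  show "{0..int h * int b} \<subseteq> hsumset h ?A"
  proof
    fix t assume t: "t \<in> {0..int h * int b}"
    then have "nat t \<le> b * h"
      by (simp add: nat_le_iff mult.commute)
    then obtain x y z where "x + y + z \<le> h"
      and n: "int (nat t) = int x + int y * (int b - 1) + int z * int b"
      using nat_le_mult_sum_one_pred_self assms by blast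
    have "int x * 1 + int y * (int b - 1) + int z * int b + int (h - (x + y + z)) * 0
        \<in> hsumset (x + y + z + (h - (x + y + z))) ?A"
      by (intro mem_hsumset_add of_nat_mult_mem_hsumset) auto
    with \<open>x + y + z \<le> h\<close> n t show "t \<in> hsumset h ?A"
      by simp
  qed
qed

theorem mainTheorem4:
  fixes h :: nat
  assumes "h \<ge> 1"
  shows "{b * h + 1 | b. 3 \<le> b \<and> b \<le> h + 2} \<subseteq> sumset_sizes h 4"
proof
  fix s assume "s \<in> {b * h + 1 | b. 3 \<le> b \<and> b \<le> h + 2}"
  then obtain b where s: "s = b * h + 1" and "3 \<le> b" and "b \<le> h + 2"
    by blast
  define A where "A = {0, 1, int b - 1, int b}"
  have "card A = 4"
    using \<open>3 \<le> b\<close> unfolding A_def by auto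
  have "hsumset h A = {0..int (b * h)}"
    using hsumset_eq_atLeastAtMost[of b h] \<open>3 \<le> b\<close> \<open>b \<le> h + 2\<close>
    unfolding A_def by (simp add: mult.commute)
  then have "card (hsumset h A) = s"
    unfolding s by (simp only: card_atLeastAtMost_0_int)
  with \<open>card A = 4\<close> show "s \<in> sumset_sizes h 4"
    unfolding sumset_sizes_def A_def by auto
qed

end
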